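(* Let $d_1,\dots,d_n$ be positive square-free integers with $[\mathbb{Q}(\sqrt{d_1},\dots,\sqrt{d_n}):\mathbb{Q}]=2^n=r$, $F=\mathbb{Q}(\sqrt{d_1},\dots,\sqrt{d_n})$, let $\mathfrak{M}$ be a fractional ideal of $F$ and $\delta=\min(\mathfrak{M})$. Suppose $s\in\mathfrak{M}$, $s\ne0$, satisfies $|\sigma_j(s)|\le\delta/\sqrt{r}$ for all $j=1,\dots,r$. Then $\|\sigma(s)\|=\delta$ (so $s\in B_{\mathfrak{M}}$), $|\sigma_j(s)|=\delta/\sqrt r$ for all $j$, and $s=x\sqrt{d_T}$ for some $x\in\mathbb{Q}$ and some $T\subseteq\{1,\dots,n\}$; in particular $2^n x^2 d_T=\delta^2$, i.e. the coefficient vector of $s$ is a solution of $2^n\sum_{T'}d_{T'}X_{T'}^2=\delta^2$ with at most one nonzero coordinate.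
   Context: $\sigma_1,\dots,\sigma_r$ are the real embeddings of $F$, $\|\sigma(s)\|=\sqrt{\sum_j\sigma_j(s)^2}$, $\min(\mathfrak{M})=\min\{\|\sigma(t)\|: t\in\mathfrak{M},\ t\ne0\}$, $B_{\mathfrak{M}}=\{t\in\mathfrak{M}:\|\sigma(t)\|=\min(\mathfrak{M})\}$. For $T\subseteq\{1,\dots,n\}$, $d_T=\prod_{l\in T}d_l$ ($d_\emptyset=1$) and $\sqrt{d_T}=\prod_{l\in T}\sqrt{d_l}$; every element of $F$ is uniquely $\sum_T x_T\sqrt{d_T}$ with $x_T\in\mathbb{Q}$ (its coefficient vector). *)

theory Defs
  imports "HOL-Analysis.Analysis" "HOL-Computational_Algebra.Computational_Algebra"
begin

text \<open>The field F = Q(sqrt d_1, ..., sqrt d_n) is realised as a subfield of the reals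
  (all d_l are positive).  Indices l range over {1..n}, subsets T over Pow {1..n}.\<close>

definition dT :: "(nat \<Rightarrow> int) \<Rightarrow> nat set \<Rightarrow> int" where
  "dT d T = (\<Prod>l\<in>T. d l)"

definition sqrt_dT :: "(nat \<Rightarrow> int) \<Rightarrow> nat set \<Rightarrow> real" where
  "sqrt_dT d T = (\<Prod>l\<in>T. sqrt (real_of_int (d l)))"

definition Fld :: "(nat \<Rightarrow> int) \<Rightarrow> nat \<Rightarrow> real set" where
  "Fld d n = {s. \<exists>x :: nat set \<Rightarrow> rat.
      s = (\<Sum>T\<in>Pow {1..n}. of_rat (x T) * sqrt_dT d T)}"

text \<open>[F : Q] = 2^n: the 2^n spanning elements sqrt d_T are Q-linearly independent.\<close>
definition full_degree :: "(nat \<Rightarrow> int) \<Rightarrow> nat \<Rightarrow> bool" where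
  "full_degree d n \<longleftrightarrow> (\<forall>x :: nat set \<Rightarrow> rat.
      (\<Sum>T\<in>Pow {1..n}. of_rat (x T) * sqrt_dT d T) = 0 \<longrightarrow> (\<forall>T\<in>Pow {1..n}. x T = 0))"

text \<open>Real embeddings of F: ring homomorphisms F \<rightarrow> R (extended by 0 outside F).\<close>
definition real_embs :: "(nat \<Rightarrow> int) \<Rightarrow> nat \<Rightarrow> (real \<Rightarrow> real) set" where
  "real_embs d n = {\<sigma>. (\<forall>a\<in>Fld d n. \<forall>b\<in>Fld d n.
        \<sigma> (a + b) = \<sigma> a + \<sigma> b \<and> \<sigma> (a * b) = \<sigma> a * \<sigma> b)
      \<and> \<sigma> 1 = 1 \<and> (\<forall>a. a \<notin> Fld d n \<longrightarrow> \<sigma> a = 0)}"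

definition emb_norm :: "(nat \<Rightarrow> int) \<Rightarrow> nat \<Rightarrow> real \<Rightarrow> real" where
  "emb_norm d n s = sqrt (\<Sum>\<sigma>\<in>real_embs d n. (\<sigma> s)\<^sup>2)"

definition ring_of_integers :: "(nat \<Rightarrow> int) \<Rightarrow> nat \<Rightarrow> real set" where
  "ring_of_integers d n = {a \<in> Fld d n. algebraic_int a}"

definition frac_ideal :: "(nat \<Rightarrow> int) \<Rightarrow> nat \<Rightarrow> real set \<Rightarrow> bool" where
  "frac_ideal d n M \<longleftrightarrow> M \<subseteq> Fld d n \<and> 0 \<in> M \<and> M \<noteq> {0}
     \<and> (\<forall>a\<in>M. \<forall>b\<in>M. a + b \<in> M)
     \<and> (\<forall>a\<in>ring_of_integers d n. \<forall>m\<in>M. a * m \<in> M)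
     \<and> (\<exists>c::int. c \<noteq> 0 \<and> (\<forall>m\<in>M. of_int c * m \<in> ring_of_integers d n))"

text \<open>min(M) = min of ||sigma(t)|| over nonzero t in M (written as an infimum; it is attained).\<close>
definition min_ideal :: "(nat \<Rightarrow> int) \<Rightarrow> nat \<Rightarrow> real set \<Rightarrow> real" where
  "min_ideal d n M = Inf {emb_norm d n t | t. t \<in> M \<and> t \<noteq> 0}"

end

theory Submission
  imports Defs
begin

text \<open>An embedding of \<open>F\<close> is determined by the signs it gives to the \<open>\<surd>d\<^sub>l\<close>, so there are at
  most \<open>2\<^sup>n\<close> of them.  As \<open>s\<close> is a nonzero element of \<open>\<M>\<close>, \<open>\<delta> \<le> \<parallel>\<sigma>(s)\<parallel>\<close>, while the hypothesis
  bounds \<open>\<parallel>\<sigma>(s)\<parallel>\<^sup>2\<close> by (number of embeddings) \<open>\<cdot> \<delta>\<^sup>2/2\<^sup>n \<le> \<delta>\<^sup>2\<close>.  So equality holds throughout: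
  there are exactly \<open>2\<^sup>n\<close> embeddings, realising every sign pattern, and every \<open>\<sigma>\<^sub>j(s)\<^sup>2\<close> equals
  \<open>\<delta>\<^sup>2/2\<^sup>n\<close>.  Writing \<open>s = \<Sum> x\<^sub>T \<surd>d\<^sub>T\<close>, the square of \<open>\<Sum> x\<^sub>T \<epsilon>\<^sub>T \<surd>d\<^sub>T\<close> is therefore the same for every
  sign vector \<open>\<epsilon>\<close>.  Comparing \<open>\<epsilon>\<^sub>i = 1\<close> with \<open>\<epsilon>\<^sub>i = -1\<close> kills the coefficients with \<open>i \<in> T\<close> or
  those with \<open>i \<notin> T\<close>, so by induction over the indices and linear independence of the \<open>\<surd>d\<^sub>T\<close>
  at most one \<open>x\<^sub>T\<close> is nonzero.\<close>

lemma sum_Pow_insert: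
  assumes "finite I" "i \<notin> I"
  shows "(\<Sum>T\<in>Pow (insert i I). g T) = (\<Sum>T\<in>Pow I. g T) + (\<Sum>T\<in>Pow I. g (insert i T))"
proof -
  have inj: "inj_on (insert i) (Pow I)"
    using assms(2) by (auto simp: inj_on_def)
  have "(\<Sum>T\<in>Pow (insert i I). g T) = (\<Sum>T\<in>Pow I \<union> insert i ` Pow I. g T)"
    by (simp add: Pow_insert)
  also have "\<dots> = (\<Sum>T\<in>Pow I. g T) + (\<Sum>T\<in>insert i ` Pow I. g T)"
    by (rule sum.union_disjoint) (use assms in auto)
  also have "(\<Sum>T\<in>insert i ` Pow I. g T) = (\<Sum>T\<in>Pow I. g (insert i T))"
    by (simp add: sum.reindex[OF inj])
  finally show ?thesis .
qed

lemma sum_le_card_bound_imp_eq: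
  fixes f :: "'a \<Rightarrow> real"
  assumes "finite A" "card A \<le> N" "\<forall>a\<in>A. f a \<le> c" "c > 0" "N * c \<le> sum f A"
  shows "card A = N" "\<forall>a\<in>A. f a = c"
proof -
  have "sum f A \<le> card A * c"
    using sum_bounded_above[of A f c] assms(3) by auto
  moreover have "card A * c \<le> N * c"
    using assms(2,4) by simp
  ultimately have sum_eq: "sum f A = card A * c" and "card A * c = N * c"
    using assms(5) by linarith+
  then show "card A = N"
    using assms(4) by simp
  have "(\<Sum>a\<in>A. c - f a) = 0"
    using sum_eq by (simp add: sum_subtractf)
  then show "\<forall>a\<in>A. f a = c"
    using sum_nonneg_eq_0_iff[OF assms(1), of "\<lambda>a. c - f a"] assms(3) by auto
qed

subsection \<open>Signed sums of square roots\<close>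

definition sqrt_indep :: "(nat \<Rightarrow> int) \<Rightarrow> nat set \<Rightarrow> bool" where
  "sqrt_indep d I \<longleftrightarrow> (\<forall>y :: nat set \<Rightarrow> rat.
      (\<Sum>T\<in>Pow I. of_rat (y T) * sqrt_dT d T) = 0 \<longrightarrow> (\<forall>T\<in>Pow I. y T = 0))"

lemma full_degree_iff_sqrt_indep: "full_degree d n \<longleftrightarrow> sqrt_indep d {1..n}"
  by (simp add: full_degree_def sqrt_indep_def)

lemma sqrt_indep_subset:
  assumes indep: "sqrt_indep d J" and "I \<subseteq> J" "finite J"
  shows "sqrt_indep d I"
  unfolding sqrt_indep_def
proof (intro allI impI)
  fix y :: "nat set \<Rightarrow> rat"
  assume y0: "(\<Sum>T\<in>Pow I. of_rat (y T) * sqrt_dT d T) = 0"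
  define z where "z T = (if T \<subseteq> I then y T else 0)" for T
  have "(\<Sum>T\<in>Pow J. of_rat (z T) * sqrt_dT d T) = (\<Sum>T\<in>Pow I. of_rat (z T) * sqrt_dT d T)"
    by (rule sum.mono_neutral_right) (use assms in \<open>auto simp: z_def\<close>)
  also have "\<dots> = 0"
    using y0 by (simp add: z_def)
  finally have "\<forall>T\<in>Pow J. z T = 0"
    using indep unfolding sqrt_indep_def by blast
  then show "\<forall>T\<in>Pow I. y T = 0"
    using \<open>I \<subseteq> J\<close> unfolding z_def by (metis Pow_iff order_trans)
qed

definition sign_vector :: "nat set \<Rightarrow> (nat \<Rightarrow> real) \<Rightarrow> bool" where
  "sign_vector I \<epsilon> \<longleftrightarrow> (\<forall>l\<in>I. \<epsilon> l = 1 \<or> \<epsilon> l = -1)"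

text \<open>The conjugate of \<open>\<Sum> x\<^sub>T \<surd>d\<^sub>T\<close> that sends each \<open>\<surd>d\<^sub>l\<close> to \<open>\<epsilon>\<^sub>l \<surd>d\<^sub>l\<close>.\<close>

definition signed_sum ::
    "(nat \<Rightarrow> int) \<Rightarrow> nat set \<Rightarrow> (nat set \<Rightarrow> rat) \<Rightarrow> (nat \<Rightarrow> real) \<Rightarrow> real" where
  "signed_sum d I x \<epsilon> = (\<Sum>T\<in>Pow I. of_rat (x T) * (\<Prod>l\<in>T. \<epsilon> l) * sqrt_dT d T)"

lemma signed_sum_ones: "signed_sum d I x (\<lambda>_. 1) = (\<Sum>T\<in>Pow I. of_rat (x T) * sqrt_dT d T)"
  by (simp add: signed_sum_def)

lemma signed_sum_cong:
  "(\<And>l. l \<in> I \<Longrightarrow> \<epsilon> l = \<epsilon>' l) \<Longrightarrow> signed_sum d I x \<epsilon> = signed_sum d I x \<epsilon>'"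
  unfolding signed_sum_def by (auto simp: subset_iff intro!: sum.cong prod.cong)

lemma signed_sum_zero: "\<forall>T\<in>Pow I. x T = 0 \<Longrightarrow> signed_sum d I x \<epsilon> = 0"
  by (simp add: signed_sum_def)

lemma sqrt_dT_insert:
  assumes "finite T" "i \<notin> T"
  shows "sqrt_dT d (insert i T) = sqrt (real_of_int (d i)) * sqrt_dT d T"
  using assms by (simp add: sqrt_dT_def)

lemma signed_sum_insert:
  assumes "finite I" "i \<notin> I"
  shows "signed_sum d (insert i I) x \<epsilon>
    = signed_sum d I x \<epsilon> + \<epsilon> i * sqrt (real_of_int (d i)) * signed_sum d I (\<lambda>T. x (insert i T)) \<epsilon>"
proof -
  have fin: "finite T" and iT: "i \<notin> T" if "T \<in> Pow I" for T
    using that assms finite_subset by auto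
  have "(\<Sum>T\<in>Pow I. of_rat (x (insert i T)) * (\<Prod>l\<in>insert i T. \<epsilon> l) * sqrt_dT d (insert i T))
      = (\<Sum>T\<in>Pow I. \<epsilon> i * sqrt (real_of_int (d i)) * (of_rat (x (insert i T)) * (\<Prod>l\<in>T. \<epsilon> l) * sqrt_dT d T))"
    by (rule sum.cong) (auto simp: sqrt_dT_insert fin iT)
  then show ?thesis
    unfolding signed_sum_def sum_Pow_insert[OF assms] by (simp add: sum_distrib_left)
qed

lemma constant_square_signed_sum_insert_halves:
  assumes I: "finite I" "i \<notin> I"
    and const: "\<forall>\<epsilon>. sign_vector (insert i I) \<epsilon> \<longrightarrow> (signed_sum d (insert i I) x \<epsilon>)\<^sup>2 = C"
    and \<epsilon>: "sign_vector I \<epsilon>" and c: "c = 1 \<or> c = -1"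
  shows "(signed_sum d I x \<epsilon> + c * sqrt (real_of_int (d i)) * signed_sum d I (\<lambda>T. x (insert i T)) \<epsilon>)\<^sup>2 = C"
proof -
  have "sign_vector (insert i I) (\<epsilon>(i := c))"
    using \<epsilon> c I(2) by (auto simp: sign_vector_def)
  moreover have "signed_sum d I y (\<epsilon>(i := c)) = signed_sum d I y \<epsilon>" for y
    using I(2) by (auto intro: signed_sum_cong)
  ultimately show ?thesis
    using const[rule_format, of "\<epsilon>(i := c)"] signed_sum_insert[OF I, of d x "\<epsilon>(i := c)"] by simp
qed

text \<open>Flipping \<open>\<epsilon>\<^sub>i\<close> turns \<open>A + \<surd>d\<^sub>i B\<close> into \<open>A - \<surd>d\<^sub>i B\<close>; equal squares force \<open>A B = 0\<close>, and at
  \<open>\<epsilon> = 1\<close> linear independence turns \<open>A = 0\<close> or \<open>B = 0\<close> into the vanishing of a whole half of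
  the coefficients.\<close>

lemma constant_square_signed_sum_insert:
  assumes I: "finite I" "i \<notin> I" and di: "d i > 0" and indep: "sqrt_indep d I"
    and const: "\<forall>\<epsilon>. sign_vector (insert i I) \<epsilon> \<longrightarrow> (signed_sum d (insert i I) x \<epsilon>)\<^sup>2 = C"
  obtains
    "\<forall>T\<in>Pow I. x T = 0"
    "\<forall>\<epsilon>. sign_vector I \<epsilon> \<longrightarrow> (signed_sum d I (\<lambda>T. x (insert i T)) \<epsilon>)\<^sup>2 = C / d i"
  | "\<forall>T\<in>Pow I. x (insert i T) = 0"
    "\<forall>\<epsilon>. sign_vector I \<epsilon> \<longrightarrow> (signed_sum d I x \<epsilon>)\<^sup>2 = C"
proof -
  define r where "r = sqrt (real_of_int (d i))"
  define A where "A = signed_sum d I x"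
  define B where "B = signed_sum d I (\<lambda>T. x (insert i T))"
  have r: "r > 0" "r\<^sup>2 = d i"
    using di by (simp_all add: r_def)
  have plus: "(A \<epsilon> + r * B \<epsilon>)\<^sup>2 = C" and minus: "(A \<epsilon> - r * B \<epsilon>)\<^sup>2 = C"
    if "sign_vector I \<epsilon>" for \<epsilon>
    using constant_square_signed_sum_insert_halves[OF I const that, of 1]
      constant_square_signed_sum_insert_halves[OF I const that, of "-1"]
    by (simp_all add: A_def B_def r_def)
  have ones: "sign_vector I (\<lambda>_. 1)"
    by (simp add: sign_vector_def)
  have "(A (\<lambda>_. 1) + r * B (\<lambda>_. 1))\<^sup>2 - (A (\<lambda>_. 1) - r * B (\<lambda>_. 1))\<^sup>2
      = 4 * r * (A (\<lambda>_. 1) * B (\<lambda>_. 1))"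
    by (simp add: power2_eq_square algebra_simps)
  then have "A (\<lambda>_. 1) = 0 \<or> B (\<lambda>_. 1) = 0"
    using plus[OF ones] minus[OF ones] r(1) by simp
  then show ?thesis
  proof
    assume "A (\<lambda>_. 1) = 0"
    then have x0: "\<forall>T\<in>Pow I. x T = 0"
      using indep by (simp add: A_def signed_sum_ones sqrt_indep_def)
    have "(B \<epsilon>)\<^sup>2 = C / d i" if "sign_vector I \<epsilon>" for \<epsilon>
      using plus[OF that] r di by (simp add: A_def signed_sum_zero[OF x0] power_mult_distrib field_simps)
    with x0 that(1) show ?thesis
      by (simp add: B_def)
  next
    assume "B (\<lambda>_. 1) = 0"
    then have x0: "\<forall>T\<in>Pow I. x (insert i T) = 0"
      using indep[unfolded sqrt_indep_def, rule_format, of "\<lambda>T. x (insert i T)"]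
      by (simp add: B_def signed_sum_ones)
    have "(A \<epsilon>)\<^sup>2 = C" if "sign_vector I \<epsilon>" for \<epsilon>
      using plus[OF that] by (simp add: B_def signed_sum_zero[OF x0])
    with x0 that(2) show ?thesis
      by (simp add: A_def)
  qed
qed

lemma constant_square_signed_sum_unique_support:
  assumes "finite I" "\<forall>l\<in>I. d l > 0" "sqrt_indep d I"
    and "\<forall>\<epsilon>. sign_vector I \<epsilon> \<longrightarrow> (signed_sum d I x \<epsilon>)\<^sup>2 = C"
    and "T \<subseteq> I" "U \<subseteq> I" "x T \<noteq> 0" "x U \<noteq> 0"
  shows "T = U"
  using assms
proof (induction I arbitrary: x C T U rule: finite_induct)
  case empty
  then show ?case by simp
next
  case (insert i I)
  have indep: "sqrt_indep d I"
    by (rule sqrt_indep_subset[OF insert.prems(2)]) (use insert.hyps(1) in auto)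
  from insert.hyps(1,2) _ indep insert.prems(3) show ?case
  proof (rule constant_square_signed_sum_insert)
    show "d i > 0" using insert.prems(1) by simp
  next
    assume x0: "\<forall>T\<in>Pow I. x T = 0"
      and const: "\<forall>\<epsilon>. sign_vector I \<epsilon> \<longrightarrow> (signed_sum d I (\<lambda>T. x (insert i T)) \<epsilon>)\<^sup>2 = C / d i"
    have "i \<in> T" "i \<in> U"
      using x0 insert.prems(4-7) by auto
    then have "T - {i} \<subseteq> I" "U - {i} \<subseteq> I" "x (insert i (T - {i})) \<noteq> 0" "x (insert i (U - {i})) \<noteq> 0"
      using insert.prems(4-7) by (auto simp: insert_absorb)
    then have "T - {i} = U - {i}"
      using insert.IH[OF _ indep const] insert.prems(1) by simp
    with \<open>i \<in> T\<close> \<open>i \<in> U\<close> show ?case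
      by blast
  next
    assume x0: "\<forall>T\<in>Pow I. x (insert i T) = 0"
      and const: "\<forall>\<epsilon>. sign_vector I \<epsilon> \<longrightarrow> (signed_sum d I x \<epsilon>)\<^sup>2 = C"
    have "i \<notin> T" "i \<notin> U"
      using x0 insert.prems(4-7) by (metis Diff_subset_conv PowI insert_Diff insert_is_Un)+
    then have "T \<subseteq> I" "U \<subseteq> I"
      using insert.prems(4,5) by auto
    then show ?case
      using insert.IH[OF _ indep const] insert.prems(1,6,7) by simp
  qed
qed

subsection \<open>The field and its real embeddings\<close>

lemma Fld_add: "a \<in> Fld d n \<Longrightarrow> b \<in> Fld d n \<Longrightarrow> a + b \<in> Fld d n"
proof -
  assume "a \<in> Fld d n" "b \<in> Fld d n"
  then obtain x y where a: "a = (\<Sum>T\<in>Pow {1..n}. of_rat (x T) * sqrt_dT d T)"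
    and b: "b = (\<Sum>T\<in>Pow {1..n}. of_rat (y T) * sqrt_dT d T)"
    unfolding Fld_def by blast
  have "a + b = (\<Sum>T\<in>Pow {1..n}. of_rat (x T + y T) * sqrt_dT d T)"
    unfolding a b by (simp add: sum.distrib[symmetric] of_rat_add distrib_right)
  then show ?thesis
    unfolding Fld_def by (auto intro: exI[of _ "\<lambda>T. x T + y T"])
qed

lemma Fld_basis:
  assumes "T \<subseteq> {1..n}"
  shows "of_rat q * sqrt_dT d T \<in> Fld d n"
proof -
  have "(\<Sum>U\<in>Pow {1..n}. of_rat (if U = T then q else 0) * sqrt_dT d U)
      = (\<Sum>U\<in>Pow {1..n}. if U = T then of_rat q * sqrt_dT d T else 0)"
    by (rule sum.cong) auto
  also have "\<dots> = of_rat q * sqrt_dT d T"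
    using assms by simp
  finally show ?thesis
    unfolding Fld_def by (auto intro: exI[of _ "\<lambda>U. if U = T then q else 0"])
qed

lemma sqrt_dT_empty [simp]: "sqrt_dT d {} = 1"
  by (simp add: sqrt_dT_def)

lemma Fld_of_rat: "(of_rat q :: real) \<in> Fld d n"
  using Fld_basis[of "{}" n q d] by simp

lemma Fld_sum: "(\<And>T. T \<in> S \<Longrightarrow> g T \<in> Fld d n) \<Longrightarrow> sum g S \<in> Fld d n"
  by (induction S rule: infinite_finite_induct) (simp_all add: Fld_add Fld_of_rat[of 0, simplified])

lemma Fld_of_int: "(of_int k :: real) \<in> Fld d n"
  using Fld_of_rat[of "of_int k"] by simp

lemma Fld_sqrt_dT: "T \<subseteq> {1..n} \<Longrightarrow> sqrt_dT d T \<in> Fld d n"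
  using Fld_basis[of T n 1 d] by simp

lemma Fld_sqrt: "l \<in> {1..n} \<Longrightarrow> sqrt (real_of_int (d l)) \<in> Fld d n"
  using Fld_sqrt_dT[of "{l}" n d] by (simp add: sqrt_dT_def)

lemma sqrt_dT_sq:
  assumes "\<forall>l\<in>T. d l \<ge> 0"
  shows "(sqrt_dT d T)\<^sup>2 = of_int (dT d T)"
  unfolding sqrt_dT_def dT_def of_int_prod prod_power_distrib
  using assms by (auto intro!: prod.cong)

lemma sqrt_dT_mult:
  assumes "finite T" "finite U" "\<forall>l\<in>T \<inter> U. d l \<ge> 0"
  shows "sqrt_dT d T * sqrt_dT d U = of_int (dT d (T \<inter> U)) * sqrt_dT d ((T - U) \<union> (U - T))"
proof -
  have split: "sqrt_dT d X = sqrt_dT d (X - Y) * sqrt_dT d (X \<inter> Y)" if "finite X" for X Y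
  proof -
    have "sqrt_dT d X = sqrt_dT d ((X - Y) \<union> (X \<inter> Y))"
      by (simp add: Un_Diff_Int)
    also have "\<dots> = sqrt_dT d (X - Y) * sqrt_dT d (X \<inter> Y)"
      unfolding sqrt_dT_def by (rule prod.union_disjoint) (use that in auto)
    finally show ?thesis .
  qed
  have symdiff: "sqrt_dT d (T - U) * sqrt_dT d (U - T) = sqrt_dT d ((T - U) \<union> (U - T))"
    unfolding sqrt_dT_def using assms by (subst prod.union_disjoint) auto
  have "sqrt_dT d T * sqrt_dT d U
      = sqrt_dT d (T - U) * sqrt_dT d (U - T) * (sqrt_dT d (T \<inter> U))\<^sup>2"
    using split[OF assms(1), of U] split[OF assms(2), of T]
    by (simp add: Int_commute power2_eq_square algebra_simps)
  then show ?thesis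
    using symdiff sqrt_dT_sq[of "T \<inter> U" d] assms(3) by simp
qed

lemma Fld_mult:
  assumes d: "\<forall>l\<in>{1..n}. d l > 0" and "a \<in> Fld d n" "b \<in> Fld d n"
  shows "a * b \<in> Fld d n"
proof -
  obtain x y where a: "a = (\<Sum>T\<in>Pow {1..n}. of_rat (x T) * sqrt_dT d T)"
    and b: "b = (\<Sum>U\<in>Pow {1..n}. of_rat (y U) * sqrt_dT d U)"
    using assms(2,3) unfolding Fld_def by blast
  have "(of_rat (x T) * sqrt_dT d T) * (of_rat (y U) * sqrt_dT d U) \<in> Fld d n"
    if "T \<subseteq> {1..n}" "U \<subseteq> {1..n}" for T U
  proof -
    have "finite T" "finite U"
      using that finite_atLeastAtMost rev_finite_subset by blast+
    moreover have "\<forall>l\<in>T \<inter> U. d l \<ge> 0"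
      using that d by (auto intro: less_imp_le)
    ultimately have "(of_rat (x T) * sqrt_dT d T) * (of_rat (y U) * sqrt_dT d U)
        = of_rat (x T * y U * of_int (dT d (T \<inter> U))) * sqrt_dT d ((T - U) \<union> (U - T))"
      by (simp add: sqrt_dT_mult of_rat_mult algebra_simps)
    also have "\<dots> \<in> Fld d n"
      using that by (intro Fld_basis) auto
    finally show ?thesis .
  qed
  then show ?thesis
    unfolding a b sum_product by (auto intro!: Fld_sum)
qed

lemma Fld_restrict_id_in_real_embs:
  assumes "\<forall>l\<in>{1..n}. d l > 0"
  shows "(\<lambda>a. if a \<in> Fld d n then a else 0) \<in> real_embs d n"
  unfolding real_embs_def using Fld_add Fld_mult[OF assms] Fld_of_rat[of 1 d n] by auto

context
  fixes \<sigma> and d :: "nat \<Rightarrow> int" and n :: nat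
  assumes \<sigma>: "\<sigma> \<in> real_embs d n"
begin

lemma emb_add: "a \<in> Fld d n \<Longrightarrow> b \<in> Fld d n \<Longrightarrow> \<sigma> (a + b) = \<sigma> a + \<sigma> b"
  and emb_mult: "a \<in> Fld d n \<Longrightarrow> b \<in> Fld d n \<Longrightarrow> \<sigma> (a * b) = \<sigma> a * \<sigma> b"
  and emb_one: "\<sigma> 1 = 1"
  and emb_outside: "a \<notin> Fld d n \<Longrightarrow> \<sigma> a = 0"
  using \<sigma> unfolding real_embs_def by auto

lemma emb_zero: "\<sigma> 0 = 0"
  using emb_add[of 0 0] Fld_of_int[of 0 d n] by simp

lemma emb_uminus:
  assumes "a \<in> Fld d n" "- a \<in> Fld d n"
  shows "\<sigma> (- a) = - \<sigma> a"
  using emb_add[OF assms] by (simp add: emb_zero)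

lemma emb_of_int: "\<sigma> (of_int k) = of_int k"
proof -
  have nat: "\<sigma> (of_nat m) = of_nat m" for m
  proof (induction m)
    case 0
    then show ?case by (simp add: emb_zero)
  next
    case (Suc m)
    then show ?case
      using emb_add[of "of_nat m" 1] Fld_of_int[of "int m" d n] Fld_of_int[of 1 d n]
      by (simp add: emb_one add.commute)
  qed
  show ?thesis
  proof (cases "k \<ge> 0")
    case True
    then show ?thesis using nat[of "nat k"] by simp
  next
    case False
    then show ?thesis
      using nat[of "nat (- k)"] emb_uminus[of "of_int (- k)"] Fld_of_int[of "- k" d n]
        Fld_of_int[of k d n] by simp
  qed
qed

lemma emb_of_rat: "\<sigma> (of_rat q) = of_rat q"
proof -
  obtain a b where "quotient_of q = (a, b)"
    by (cases "quotient_of q")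
  then have q: "q = of_int a / of_int b" and b: "b > 0"
    using quotient_of_div quotient_of_denom_pos by auto
  have ab: "of_int b * of_rat q = (of_int a :: real)"
    using b by (simp add: q of_rat_divide)
  have "of_int a = \<sigma> (of_int b * of_rat q)"
    by (simp only: ab emb_of_int)
  also have "\<dots> = of_int b * \<sigma> (of_rat q)"
    by (simp add: emb_mult Fld_of_int Fld_of_rat emb_of_int)
  finally have "of_int a = of_int b * \<sigma> (of_rat q)" .
  then show ?thesis
    using b by (simp add: q of_rat_divide field_simps)
qed

lemma emb_sum: "(\<And>T. T \<in> S \<Longrightarrow> g T \<in> Fld d n) \<Longrightarrow> \<sigma> (sum g S) = (\<Sum>T\<in>S. \<sigma> (g T))"
proof (induction S rule: infinite_finite_induct)
  case (infinite S)
  then show ?case by (simp add: emb_zero)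
next
  case empty
  then show ?case by (simp add: emb_zero)
next
  case (insert a S)
  then show ?case using emb_add[of "g a" "sum g S"] Fld_sum[of S g d n] by simp
qed

lemma emb_sqrt_dT: "T \<subseteq> {1..n} \<Longrightarrow> \<sigma> (sqrt_dT d T) = (\<Prod>l\<in>T. \<sigma> (sqrt (real_of_int (d l))))"
proof (induction T rule: infinite_finite_induct)
  case (infinite T)
  then show ?case using finite_subset by blast
next
  case empty
  then show ?case by (simp add: emb_one)
next
  case (insert i T)
  then show ?case
    using emb_mult[OF Fld_sqrt Fld_sqrt_dT, of i T] by (simp add: sqrt_dT_insert)
qed

lemma emb_expansion:
  "\<sigma> (\<Sum>T\<in>Pow {1..n}. of_rat (x T) * sqrt_dT d T)
     = (\<Sum>T\<in>Pow {1..n}. of_rat (x T) * (\<Prod>l\<in>T. \<sigma> (sqrt (real_of_int (d l)))))"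
proof -
  have "\<sigma> (of_rat (x T) * sqrt_dT d T) = of_rat (x T) * (\<Prod>l\<in>T. \<sigma> (sqrt (real_of_int (d l))))"
    if "T \<subseteq> {1..n}" for T
    using emb_mult[OF Fld_of_rat Fld_sqrt_dT[OF that]] by (simp add: emb_of_rat emb_sqrt_dT[OF that])
  moreover have "\<sigma> (\<Sum>T\<in>Pow {1..n}. of_rat (x T) * sqrt_dT d T)
      = (\<Sum>T\<in>Pow {1..n}. \<sigma> (of_rat (x T) * sqrt_dT d T))"
    by (rule emb_sum) (simp add: Fld_basis)
  ultimately show ?thesis
    by simp
qed

lemma emb_sqrt_sign:
  assumes "l \<in> {1..n}" "d l > 0"
  shows "\<sigma> (sqrt (real_of_int (d l))) \<in> {sqrt (real_of_int (d l)), - sqrt (real_of_int (d l))}"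
proof -
  have "(\<sigma> (sqrt (real_of_int (d l))))\<^sup>2 = \<sigma> (of_int (d l))"
    using emb_mult[OF Fld_sqrt Fld_sqrt, OF assms(1) assms(1)] assms(2)
    by (simp add: power2_eq_square)
  also have "\<dots> = (sqrt (real_of_int (d l)))\<^sup>2"
    using assms(2) by (simp add: emb_of_int)
  finally show ?thesis
    by (simp add: power2_eq_iff)
qed

end

lemma real_embs_eqI:
  assumes "\<sigma> \<in> real_embs d n" "\<tau> \<in> real_embs d n"
    and "\<forall>l\<in>{1..n}. \<sigma> (sqrt (real_of_int (d l))) = \<tau> (sqrt (real_of_int (d l)))"
  shows "\<sigma> = \<tau>"
proof
  fix a
  show "\<sigma> a = \<tau> a"
  proof (cases "a \<in> Fld d n")
    case True
    then obtain x where a: "a = (\<Sum>T\<in>Pow {1..n}. of_rat (x T) * sqrt_dT d T)"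
      unfolding Fld_def by blast
    show ?thesis
      unfolding a emb_expansion[OF assms(1)] emb_expansion[OF assms(2)]
      using assms(3) by (auto simp: subset_iff intro!: sum.cong prod.cong)
  next
    case False
    then show ?thesis
      using emb_outside[OF assms(1)] emb_outside[OF assms(2)] by simp
  qed
qed

subsection \<open>Counting embeddings\<close>

definition sqrt_signs :: "(nat \<Rightarrow> int) \<Rightarrow> nat \<Rightarrow> (nat \<Rightarrow> real) set" where
  "sqrt_signs d n = PiE {1..n} (\<lambda>l. {sqrt (real_of_int (d l)), - sqrt (real_of_int (d l))})"

definition values_on_sqrts :: "(nat \<Rightarrow> int) \<Rightarrow> nat \<Rightarrow> (real \<Rightarrow> real) \<Rightarrow> nat \<Rightarrow> real" where
  "values_on_sqrts d n \<sigma> = restrict (\<lambda>l. \<sigma> (sqrt (real_of_int (d l)))) {1..n}"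

lemma card_sqrt_signs:
  assumes "\<forall>l\<in>{1..n}. d l > 0"
  shows "card (sqrt_signs d n) = 2 ^ n"
proof -
  have "card (sqrt_signs d n)
      = (\<Prod>l\<in>{1..n}. card {sqrt (real_of_int (d l)), - sqrt (real_of_int (d l))})"
    unfolding sqrt_signs_def by (rule card_PiE) simp
  also have "\<dots> = (\<Prod>l\<in>{1..n}. 2)"
  proof (rule prod.cong)
    fix l
    assume "l \<in> {1..n}"
    then have "sqrt (real_of_int (d l)) \<noteq> 0"
      using assms[rule_format, of l] by simp
    then show "card {sqrt (real_of_int (d l)), - sqrt (real_of_int (d l))} = 2"
      by simp
  qed simp
  finally show ?thesis
    by simp
qed

lemma finite_sqrt_signs: "finite (sqrt_signs d n)"
  by (simp add: sqrt_signs_def finite_PiE)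

lemma values_on_sqrts_inj_on: "inj_on (values_on_sqrts d n) (real_embs d n)"
proof (rule inj_onI)
  fix \<sigma> \<tau>
  assume \<sigma>\<tau>: "\<sigma> \<in> real_embs d n" "\<tau> \<in> real_embs d n"
    and eq: "values_on_sqrts d n \<sigma> = values_on_sqrts d n \<tau>"
  have "\<forall>l\<in>{1..n}. \<sigma> (sqrt (real_of_int (d l))) = \<tau> (sqrt (real_of_int (d l)))"
  proof
    fix l
    assume "l \<in> {1..n}"
    then show "\<sigma> (sqrt (real_of_int (d l))) = \<tau> (sqrt (real_of_int (d l)))"
      using fun_cong[OF eq, of l] by (simp add: values_on_sqrts_def)
  qed
  then show "\<sigma> = \<tau>"
    by (rule real_embs_eqI[OF \<sigma>\<tau>])
qed

lemma values_on_sqrts_image: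
  assumes "\<forall>l\<in>{1..n}. d l > 0"
  shows "values_on_sqrts d n ` real_embs d n \<subseteq> sqrt_signs d n"
proof (rule image_subsetI)
  fix \<sigma>
  assume "\<sigma> \<in> real_embs d n"
  then show "values_on_sqrts d n \<sigma> \<in> sqrt_signs d n"
    using assms emb_sqrt_sign by (simp add: values_on_sqrts_def sqrt_signs_def)
qed

lemma real_embs_finite_card_le:
  assumes "\<forall>l\<in>{1..n}. d l > 0"
  shows "finite (real_embs d n)" "card (real_embs d n) \<le> 2 ^ n"
proof -
  note image = values_on_sqrts_image[OF assms]
  show "finite (real_embs d n)"
    using finite_imageD[OF finite_subset[OF image finite_sqrt_signs] values_on_sqrts_inj_on] .
  have "card (real_embs d n) = card (values_on_sqrts d n ` real_embs d n)"
    by (simp add: card_image[OF values_on_sqrts_inj_on])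
  also have "\<dots> \<le> 2 ^ n"
    using card_mono[OF finite_sqrt_signs image] card_sqrt_signs[OF assms] by simp
  finally show "card (real_embs d n) \<le> 2 ^ n" .
qed

lemma real_embs_realise_signs:
  assumes d_pos: "\<forall>l\<in>{1..n}. d l > 0" and card: "card (real_embs d n) = 2 ^ n"
    and \<epsilon>: "sign_vector {1..n} \<epsilon>"
  obtains \<sigma> where "\<sigma> \<in> real_embs d n"
    "\<forall>l\<in>{1..n}. \<sigma> (sqrt (real_of_int (d l))) = \<epsilon> l * sqrt (real_of_int (d l))"
proof -
  have "values_on_sqrts d n ` real_embs d n = sqrt_signs d n"
    using card_subset_eq[OF finite_sqrt_signs values_on_sqrts_image[OF d_pos]]
    by (simp add: card_image[OF values_on_sqrts_inj_on] card card_sqrt_signs[OF d_pos])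
  moreover have "restrict (\<lambda>l. \<epsilon> l * sqrt (real_of_int (d l))) {1..n} \<in> sqrt_signs d n"
    using \<epsilon> by (auto simp: sqrt_signs_def sign_vector_def)
  ultimately have "restrict (\<lambda>l. \<epsilon> l * sqrt (real_of_int (d l))) {1..n}
      \<in> values_on_sqrts d n ` real_embs d n"
    by simp
  then obtain \<sigma> where \<sigma>: "\<sigma> \<in> real_embs d n"
    and eq: "restrict (\<lambda>l. \<epsilon> l * sqrt (real_of_int (d l))) {1..n} = values_on_sqrts d n \<sigma>"
    by (rule imageE)
  have "\<forall>l\<in>{1..n}. \<sigma> (sqrt (real_of_int (d l))) = \<epsilon> l * sqrt (real_of_int (d l))"
  proof
    fix l
    assume "l \<in> {1..n}"
    then show "\<sigma> (sqrt (real_of_int (d l))) = \<epsilon> l * sqrt (real_of_int (d l))"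
      using fun_cong[OF eq, of l] by (simp add: values_on_sqrts_def)
  qed
  with \<sigma> show ?thesis
    by (rule that)
qed

lemma emb_eq_signed_sum:
  assumes "\<sigma> \<in> real_embs d n"
    and "\<forall>l\<in>{1..n}. \<sigma> (sqrt (real_of_int (d l))) = \<epsilon> l * sqrt (real_of_int (d l))"
  shows "\<sigma> (\<Sum>T\<in>Pow {1..n}. of_rat (x T) * sqrt_dT d T) = signed_sum d {1..n} x \<epsilon>"
  unfolding emb_expansion[OF assms(1)] signed_sum_def
  using assms(2) by (auto simp: sqrt_dT_def prod.distrib subset_iff intro!: sum.cong prod.cong)

subsection \<open>Elements with small conjugates\<close>

lemma min_ideal_le_emb_norm:
  assumes "t \<in> M" "t \<noteq> 0"
  shows "min_ideal d n M \<le> emb_norm d n t"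
  unfolding min_ideal_def
proof (rule cInf_lower)
  show "emb_norm d n t \<in> {emb_norm d n t |t. t \<in> M \<and> t \<noteq> 0}"
    using assms by blast
  show "bdd_below {emb_norm d n t |t. t \<in> M \<and> t \<noteq> 0}"
    by (rule bdd_belowI[of _ 0]) (auto simp: emb_norm_def intro!: sum_nonneg)
qed

lemma small_conjugates_extremal:
  assumes d_pos: "\<forall>l\<in>{1..n}. d l > 0" and MF: "M \<subseteq> Fld d n"
    and s_in: "s \<in> M" and s_nz: "s \<noteq> 0"
    and small: "\<forall>\<sigma>\<in>real_embs d n. \<bar>\<sigma> s\<bar> \<le> min_ideal d n M / sqrt (2 ^ n)"
  shows "min_ideal d n M > 0" "card (real_embs d n) = 2 ^ n"
    "\<forall>\<sigma>\<in>real_embs d n. (\<sigma> s)\<^sup>2 = (min_ideal d n M)\<^sup>2 / 2 ^ n"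
proof -
  define \<delta> where "\<delta> = min_ideal d n M"
  have "s \<in> Fld d n"
    using MF s_in by blast
  then have "\<bar>s\<bar> \<le> \<delta> / sqrt (2 ^ n)"
    using small[rule_format, OF Fld_restrict_id_in_real_embs[OF d_pos]] by (simp add: \<delta>_def)
  moreover have "\<bar>s\<bar> > 0"
    using s_nz by simp
  ultimately have "\<delta> / sqrt (2 ^ n) > 0"
    by linarith
  then show \<delta>_pos: "min_ideal d n M > 0"
    by (simp add: \<delta>_def zero_less_divide_iff)
  have bound: "\<forall>\<sigma>\<in>real_embs d n. (\<sigma> s)\<^sup>2 \<le> \<delta>\<^sup>2 / 2 ^ n"
    using small power_mono[OF _ abs_ge_zero, of _ "\<delta> / sqrt (2 ^ n)" 2]
    by (simp add: \<delta>_def power_divide)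
  have "\<delta>\<^sup>2 \<le> (emb_norm d n s)\<^sup>2"
    using min_ideal_le_emb_norm[OF s_in s_nz] \<delta>_pos by (simp add: \<delta>_def power_mono)
  then have sum: "real (2 ^ n) * (\<delta>\<^sup>2 / 2 ^ n) \<le> (\<Sum>\<sigma>\<in>real_embs d n. (\<sigma> s)\<^sup>2)"
    by (simp add: emb_norm_def sum_nonneg)
  have "\<delta>\<^sup>2 / 2 ^ n > 0"
    using \<delta>_pos by (simp add: \<delta>_def)
  from sum_le_card_bound_imp_eq[OF real_embs_finite_card_le[OF d_pos] bound this sum]
  show "card (real_embs d n) = 2 ^ n"
    "\<forall>\<sigma>\<in>real_embs d n. (\<sigma> s)\<^sup>2 = (min_ideal d n M)\<^sup>2 / 2 ^ n"
    by (simp_all add: \<delta>_def)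
qed

lemma constant_conjugate_squares_single_term:
  assumes d_pos: "\<forall>l\<in>{1..n}. d l > 0" and deg: "full_degree d n"
    and card: "card (real_embs d n) = 2 ^ n"
    and s: "s \<in> Fld d n" "s \<noteq> 0" and const: "\<forall>\<sigma>\<in>real_embs d n. (\<sigma> s)\<^sup>2 = C"
  obtains x T where "T \<subseteq> {1..n}" "s = of_rat x * sqrt_dT d T"
proof -
  obtain x where sx: "s = (\<Sum>T\<in>Pow {1..n}. of_rat (x T) * sqrt_dT d T)"
    using s(1) unfolding Fld_def by blast
  have "\<forall>\<epsilon>. sign_vector {1..n} \<epsilon> \<longrightarrow> (signed_sum d {1..n} x \<epsilon>)\<^sup>2 = C"
  proof (intro allI impI)
    fix \<epsilon>
    assume \<epsilon>: "sign_vector {1..n} \<epsilon>"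
    obtain \<sigma> where \<sigma>: "\<sigma> \<in> real_embs d n"
      and signs: "\<forall>l\<in>{1..n}. \<sigma> (sqrt (real_of_int (d l))) = \<epsilon> l * sqrt (real_of_int (d l))"
      using real_embs_realise_signs[OF d_pos card \<epsilon>] .
    have "\<sigma> s = signed_sum d {1..n} x \<epsilon>"
      unfolding sx using \<sigma> signs by (rule emb_eq_signed_sum)
    moreover have "(\<sigma> s)\<^sup>2 = C"
      using const \<sigma> by blast
    ultimately show "(signed_sum d {1..n} x \<epsilon>)\<^sup>2 = C"
      by simp
  qed
  then have unique: "T = U" if "T \<subseteq> {1..n}" "U \<subseteq> {1..n}" "x T \<noteq> 0" "x U \<noteq> 0" for T U
    using constant_square_signed_sum_unique_support[OF finite_atLeastAtMost d_pos
        deg[unfolded full_degree_iff_sqrt_indep] _ that] by blast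
  have "\<exists>T\<in>Pow {1..n}. x T \<noteq> 0"
  proof (rule ccontr)
    assume "\<not> ?thesis"
    then have "s = 0"
      unfolding sx by simp
    with s(2) show False ..
  qed
  then obtain T where T: "T \<subseteq> {1..n}" "x T \<noteq> 0"
    by blast
  have "s = (\<Sum>U\<in>Pow {1..n}. if U = T then of_rat (x T) * sqrt_dT d T else 0)"
    unfolding sx by (rule sum.cong) (use unique T in auto)
  also have "\<dots> = of_rat (x T) * sqrt_dT d T"
    using T(1) by simp
  finally show ?thesis
    using that T(1) by blast
qed

theorem mainTheorem9:
  fixes d :: "nat \<Rightarrow> int" and n :: nat and M :: "real set" and s :: real
  assumes d_pos: "\<forall>l\<in>{1..n}. d l > 0"
    and d_sqfree: "\<forall>l\<in>{1..n}. squarefree (d l)"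
    and deg: "full_degree d n"
    and M: "frac_ideal d n M"
    and s_in: "s \<in> M" and s_nz: "s \<noteq> 0"
    and small: "\<forall>\<sigma>\<in>real_embs d n. \<bar>\<sigma> s\<bar> \<le> min_ideal d n M / sqrt (2 ^ n)"
  shows "emb_norm d n s = min_ideal d n M
    \<and> (\<forall>\<sigma>\<in>real_embs d n. \<bar>\<sigma> s\<bar> = min_ideal d n M / sqrt (2 ^ n))
    \<and> (\<exists>x::rat. \<exists>T. T \<subseteq> {1..n} \<and> s = of_rat x * sqrt_dT d T
         \<and> 2 ^ n * (of_rat x)\<^sup>2 * of_int (dT d T) = (min_ideal d n M)\<^sup>2)"
proof -
  define \<delta> where "\<delta> = min_ideal d n M"
  have MF: "M \<subseteq> Fld d n"
    using M by (simp add: frac_ideal_def)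
  have sF: "s \<in> Fld d n"
    using MF s_in by blast
  note extremal = small_conjugates_extremal[OF d_pos MF s_in s_nz small, folded \<delta>_def]
  have "emb_norm d n s = sqrt (2 ^ n * (\<delta>\<^sup>2 / 2 ^ n))"
    using extremal(2,3) by (simp add: emb_norm_def)
  then have norm: "emb_norm d n s = \<delta>"
    using extremal(1) by simp
  have abs: "\<bar>\<sigma> s\<bar> = \<delta> / sqrt (2 ^ n)" if "\<sigma> \<in> real_embs d n" for \<sigma>
    using arg_cong[OF extremal(3)[rule_format, OF that], of sqrt] extremal(1)
    by (simp add: real_sqrt_divide)
  obtain x T where T: "T \<subseteq> {1..n}" and sT: "s = of_rat x * sqrt_dT d T"
    using constant_conjugate_squares_single_term[OF d_pos deg extremal(2) sF s_nz extremal(3)] .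
  have "\<forall>l\<in>T. d l \<ge> 0"
    using T d_pos by (auto simp: less_imp_le)
  then have "s\<^sup>2 = (of_rat x)\<^sup>2 * of_int (dT d T)"
    by (simp add: sT power_mult_distrib sqrt_dT_sq)
  moreover have "s\<^sup>2 = \<delta>\<^sup>2 / 2 ^ n"
    using extremal(3)[rule_format, OF Fld_restrict_id_in_real_embs[OF d_pos]] sF by simp
  ultimately have "2 ^ n * (of_rat x)\<^sup>2 * of_int (dT d T) = \<delta>\<^sup>2"
    by (simp add: field_simps)
  with norm abs T sT show ?thesis
    unfolding \<delta>_def by blast
qed

end
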